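(* Let $d\geq1$ be an integer and, for real $n>d/2$ and $u\in[0,+\infty)$, let $$\mathscr C_{nd}(u):=(1+4u)^n\int_0^1ds\,\frac{s^{n-1}}{\sqrt{1-s}\,(1+us)^{2n-d/2}}.$$ Then, for fixed $d$ and $n\to+\infty$, $$\mathscr C_{nd}(1/2)=\sqrt\pi\,\frac{3^{d/2+1/2}}{2^{d/2}\sqrt n}\Big(\frac43\Big)^n\Big[1+O(\tfrac1n)\Big].$$ *)

theory Defs
  imports "HOL-Analysis.Analysis" "HOL-Library.Landau_Symbols"
begin

definition Cnd :: "real \<Rightarrow> nat \<Rightarrow> real \<Rightarrow> real" where
  "Cnd n d u = (1 + 4 * u) powr n *
     (interval_lebesgue_integral lborel 0 1
       (\<lambda>s. s powr (n - 1) / (sqrt (1 - s) * (1 + u * s) powr (2 * n - real d / 2))))"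

end

theory Submission
  imports Defs "HOL-Real_Asymp.Real_Asymp"
begin

text \<open>
  Substituting s = 1 - x turns the integral of Cnd n d (1/2) into (3/2) powr (d/2 - 2n) times the
  integral over (0,1) of r(x) powr (n - 1) * (1 - x/3) powr (d/2 - 2) / sqrt x, where
  r(x) = (1 - x) / (1 - x/3)^2. Since r(x) \<le> exp (-x/3) with an error O(x^2) and
  (1 - x/3) powr (d/2 - 2) = r(x) + O(x), this integrand differs from exp (-nx/3) / sqrt x by at
  most (C x + n x^2) exp (-(n-1)x/3) / sqrt x. By the Gamma integral the main term integrates
  to Gamma(1/2) (n/3) powr (-1/2) = sqrt (3 pi / n), giving the leading term, while the error
  integrates to O(n powr (-3/2)), a relative error O(1/n).
\<close>

lemma powr_diff_le_mean_value:
  fixes a b p :: real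
  assumes "0 < b" "b \<le> a" "1 \<le> p"
  shows "a powr p - b powr p \<le> p * a powr (p - 1) * (a - b)"
proof (cases "b = a")
  case False
  with assms have ba: "b < a" by simp
  have "((\<lambda>t. t powr p) has_real_derivative p * t powr (p - 1)) (at t)"
    if "b \<le> t" "t \<le> a" for t
    using that assms by (auto intro!: derivative_eq_intros)
  from MVT2[OF ba this] obtain z where z: "b < z" "z < a"
    and eq: "a powr p - b powr p = (a - b) * (p * z powr (p - 1))"
    by blast
  have "z powr (p - 1) \<le> a powr (p - 1)"
    using z assms by (intro powr_mono2) auto
  then have "(a - b) * (p * z powr (p - 1)) \<le> (a - b) * (p * a powr (p - 1))"
    using z assms by (intro mult_left_mono) auto
  then show ?thesis
    using eq by (simp add: algebra_simps)
qed simp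

lemma exp_minus_le_quadratic:
  fixes y :: real
  assumes "0 \<le> y"
  shows "exp (- y) \<le> 1 - y + y\<^sup>2 / 2"
proof -
  have pos: "0 < 1 + y + y\<^sup>2 / 2"
    using assms by (simp add: add_pos_nonneg)
  have "(1 - y + y\<^sup>2 / 2) * (1 + y + y\<^sup>2 / 2) = 1 + (y\<^sup>2)\<^sup>2 / 4"
    by (simp add: algebra_simps power2_eq_square)
  then have "1 \<le> (1 - y + y\<^sup>2 / 2) * (1 + y + y\<^sup>2 / 2)"
    by simp
  then have "1 / (1 + y + y\<^sup>2 / 2) \<le> 1 - y + y\<^sup>2 / 2"
    using pos by (simp add: pos_divide_le_eq)
  moreover have "exp (- y) \<le> 1 / (1 + y + y\<^sup>2 / 2)"
    using exp_lower_Taylor_quadratic[OF assms] pos by (simp add: exp_minus field_simps)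
  ultimately show ?thesis by linarith
qed

lemma Bernoulli_powr_half:
  fixes y :: real
  assumes "0 < y" "y \<le> 1"
  shows "1 - real d * (1 - y) \<le> y powr (real d / 2)"
proof -
  have "1 + real d * (y - 1) \<le> (1 + (y - 1)) ^ d"
    using assms by (intro Bernoulli_inequality) auto
  also have "\<dots> \<le> sqrt y ^ d"
    using assms by (intro power_mono) (auto simp: real_le_rsqrt power2_eq_square mult_le_cancel_left1)
  also have "\<dots> = (y powr (1 / 2)) powr real d"
    using assms by (simp add: powr_half_sqrt powr_realpow)
  also have "\<dots> = y powr (real d / 2)"
    by (simp add: powr_powr)
  finally show ?thesis by (simp add: algebra_simps)
qed

text \<open>The value of (9/4) s / (1 + s/2)^2 at s = 1 - x: the base of the n-th power in the
  integrand of Cnd n d (1/2), normalised to 1 at its maximum s = 1.\<close>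

definition laplace_ratio :: "real \<Rightarrow> real" where
  "laplace_ratio x = (1 - x) / (1 - x / 3)\<^sup>2"

lemma laplace_ratio_bounds:
  fixes x :: real
  assumes "0 < x" "x < 1"
  shows "0 < laplace_ratio x" "laplace_ratio x \<le> exp (- (x / 3))"
    and "exp (- (x / 3)) - laplace_ratio x \<le> x\<^sup>2"
proof -
  have "(2 / 3) ^ 2 \<le> (1 - x / 3) ^ 2"
    using assms by (intro power_mono) auto
  then have y2: "4 / 9 \<le> (1 - x / 3)\<^sup>2"
    by (simp add: power2_eq_square)
  have gap: "1 - x / 3 - laplace_ratio x = x\<^sup>2 * (9 - x) / 27 / (1 - x / 3)\<^sup>2"
    using y2 by (simp add: laplace_ratio_def field_simps power2_eq_square power3_eq_cube)
  show "0 < laplace_ratio x"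
    using assms by (simp add: laplace_ratio_def)
  have "0 \<le> x\<^sup>2 * (9 - x) / 27 / (1 - x / 3)\<^sup>2"
    using assms by simp
  then show "laplace_ratio x \<le> exp (- (x / 3))"
    using gap exp_ge_add_one_self[of "- (x / 3)"] by linarith
  have "x\<^sup>2 * (9 - x) / 27 / (1 - x / 3)\<^sup>2 \<le> x\<^sup>2 * (9 - x) / 27 / (4 / 9)"
    using y2 assms by (intro divide_left_mono) auto
  also have "\<dots> \<le> 3 / 4 * x\<^sup>2"
    using assms by (simp add: field_simps)
  finally have "1 - x / 3 - laplace_ratio x \<le> 3 / 4 * x\<^sup>2"
    using gap by simp
  moreover have "exp (- (x / 3)) \<le> 1 - x / 3 + x\<^sup>2 / 18"
    using exp_minus_le_quadratic[of "x / 3"] assms by (simp add: power_divide)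
  ultimately show "exp (- (x / 3)) - laplace_ratio x \<le> x\<^sup>2"
    using zero_le_power2[of x] by linarith
qed

lemma laplace_ratio_powr_approx_exp:
  fixes p x :: real
  assumes "1 \<le> p" "0 < x" "x < 1"
  shows "\<bar>laplace_ratio x powr p - exp (- (p / 3 * x))\<bar> \<le> p * x\<^sup>2 * exp (- ((p - 1) / 3 * x))"
proof -
  let ?r = "laplace_ratio x" and ?e = "exp (- (x / 3))"
  have r: "0 < ?r" "?r \<le> ?e" "?e - ?r \<le> x\<^sup>2"
    using laplace_ratio_bounds[OF assms(2,3)] by auto
  have e_powr: "?e powr q = exp (- (q / 3 * x))" for q
    by (simp add: powr_def)
  have "?r powr p \<le> ?e powr p"
    using r assms by (intro powr_mono2) auto
  then have "\<bar>?r powr p - exp (- (p / 3 * x))\<bar> = ?e powr p - ?r powr p"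
    by (simp add: e_powr)
  also have "\<dots> \<le> p * ?e powr (p - 1) * (?e - ?r)"
    using r assms by (intro powr_diff_le_mean_value) auto
  also have "\<dots> \<le> p * ?e powr (p - 1) * x\<^sup>2"
    using r assms by (intro mult_left_mono) auto
  finally show ?thesis
    by (simp add: e_powr mult_ac)
qed

lemma powr_approx_laplace_ratio:
  fixes x :: real
  assumes "0 < x" "x < 1"
  shows "\<bar>(1 - x / 3) powr (real d / 2 - 2) - laplace_ratio x\<bar> \<le> 9 / 4 * (1 + real d / 3) * x"
proof -
  define y where "y = 1 - x / 3"
  have y: "0 < y" "y \<le> 1"
    using assms by (auto simp: y_def)
  have "(2 / 3) ^ 2 \<le> y ^ 2"
    using assms by (intro power_mono) (auto simp: y_def)
  then have y2: "4 / 9 \<le> y\<^sup>2"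
    by (simp add: power2_eq_square)
  have "y powr (real d / 2) \<le> 1"
    using y by (intro powr_le1) auto
  moreover have "1 - real d * (1 - y) \<le> y powr (real d / 2)"
    using Bernoulli_powr_half y by blast
  ultimately have num: "\<bar>y powr (real d / 2) - (1 - x)\<bar> \<le> (1 + real d / 3) * x"
    using assms by (simp add: y_def abs_le_iff algebra_simps)
  have "y powr (real d / 2 - 2) - laplace_ratio x = (y powr (real d / 2) - (1 - x)) / y\<^sup>2"
    using y by (simp add: powr_diff laplace_ratio_def y_def diff_divide_distrib powr_numeral)
  then have "\<bar>y powr (real d / 2 - 2) - laplace_ratio x\<bar> \<le> (1 + real d / 3) * x / y\<^sup>2"
    using num y by (simp add: abs_divide divide_right_mono)
  also have "\<dots> \<le> (1 + real d / 3) * x / (4 / 9)"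
    using y2 assms by (intro divide_left_mono) auto
  finally show ?thesis
    by (simp add: y_def field_simps)
qed

definition laplace_integrand :: "real \<Rightarrow> nat \<Rightarrow> real \<Rightarrow> real" where
  "laplace_integrand n d x =
     laplace_ratio x powr (n - 1) * (1 - x / 3) powr (real d / 2 - 2) / sqrt x"

lemma laplace_integrand_approx:
  fixes n x :: real
  assumes "1 \<le> n" "0 < x" "x < 1"
  shows "\<bar>laplace_integrand n d x - exp (- (n / 3 * x)) / sqrt x\<bar>
    \<le> (9 / 4 * (1 + real d / 3) * x + n * x\<^sup>2) * exp (- ((n - 1) / 3 * x)) / sqrt x"
proof -
  let ?r = "laplace_ratio x" and ?e = "exp (- ((n - 1) / 3 * x))"
  have r: "0 < ?r" "?r \<le> exp (- (x / 3))"
    using laplace_ratio_bounds[OF assms(2,3)] by auto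
  have "?r powr (n - 1) \<le> exp (- (x / 3)) powr (n - 1)"
    using r assms by (intro powr_mono2) auto
  then have r_powr: "?r powr (n - 1) \<le> ?e"
    by (simp add: powr_def)
  have "?r powr (n - 1) * ?r = ?r powr n"
    using r by (simp add: powr_diff)
  then have split: "?r powr (n - 1) * (1 - x / 3) powr (real d / 2 - 2) - exp (- (n / 3 * x))
      = ?r powr (n - 1) * ((1 - x / 3) powr (real d / 2 - 2) - ?r) + (?r powr n - exp (- (n / 3 * x)))"
    by (simp add: algebra_simps)
  have "\<bar>?r powr (n - 1) * ((1 - x / 3) powr (real d / 2 - 2) - ?r)\<bar>
      \<le> ?e * (9 / 4 * (1 + real d / 3) * x)"
    unfolding abs_mult using r_powr powr_approx_laplace_ratio[OF assms(2,3)]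
    by (intro mult_mono) auto
  moreover have "\<bar>?r powr n - exp (- (n / 3 * x))\<bar> \<le> n * x\<^sup>2 * ?e"
    using laplace_ratio_powr_approx_exp assms by blast
  ultimately have "\<bar>?r powr (n - 1) * (1 - x / 3) powr (real d / 2 - 2) - exp (- (n / 3 * x))\<bar>
      \<le> ?e * (9 / 4 * (1 + real d / 3) * x) + n * x\<^sup>2 * ?e"
    unfolding split by (intro order_trans[OF abs_triangle_ineq] add_mono)
  also have "\<dots> = (9 / 4 * (1 + real d / 3) * x + n * x\<^sup>2) * ?e"
    by (simp add: algebra_simps)
  finally show ?thesis
    using assms by (simp add: laplace_integrand_def diff_divide_distrib[symmetric] abs_divide divide_right_mono)
qed

lemma has_integral_powr_exp:
  fixes a c :: real
  assumes a: "0 < a" and c: "0 < c"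
  shows "((\<lambda>x. x powr (a - 1) * exp (- (c * x))) has_integral Gamma a / c powr a) {0<..}"
proof -
  let ?f = "\<lambda>t::real. t powr (a - 1) / exp t"
  have "((\<lambda>t. if t \<in> {0<..} then ?f t else 0) has_integral Gamma a) {0..}"
    by (rule has_integral_spike[of "{0}", rotated 2, OF Gamma_integral_real[OF a]]) auto
  then have f: "(?f has_integral Gamma a) {0<..}"
    by (subst (asm) has_integral_restrict) auto
  then have "?f absolutely_integrable_on {0<..}"
    by (intro nonnegative_absolutely_integrable_1) auto
  moreover have "(\<lambda>x. c * x) ` {0<..} = {0<..}"
    using image_linear_greaterThan[of c 0 0] c by simp
  ultimately have "(\<lambda>x. \<bar>c\<bar> * ?f (c * x)) absolutely_integrable_on {0<..} \<and>
      integral {0<..} (\<lambda>x. \<bar>c\<bar> * ?f (c * x)) = Gamma a"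
    using f c by (subst has_absolute_integral_change_of_variables_1'[where g = "\<lambda>x. c * x"])
      (auto intro!: derivative_eq_intros inj_onI simp: has_integral_iff)
  then have "((\<lambda>x. \<bar>c\<bar> * ?f (c * x)) has_integral Gamma a) {0<..}"
    by (simp add: absolutely_integrable_on_def has_integral_iff)
  from has_integral_mult_right[OF this, of "1 / c powr a"]
  have "((\<lambda>x. 1 / c powr a * (\<bar>c\<bar> * ?f (c * x))) has_integral Gamma a / c powr a) {0<..}"
    by simp
  moreover have "1 / c powr a * (\<bar>c\<bar> * ?f (c * x)) = x powr (a - 1) * exp (- (c * x))"
    if "x \<in> {0<..}" for x
  proof -
    have "c * (c * x) powr (a - 1) = c powr a * x powr (a - 1)"
      using that c by (simp add: powr_mult powr_diff)
    then show ?thesis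
      using c by (simp add: exp_minus field_simps)
  qed
  ultimately show ?thesis
    by (rule has_integral_eq[rotated])
qed

lemma has_integral_power_div_sqrt_exp:
  fixes c :: real
  assumes "0 < c"
  shows "((\<lambda>x. x ^ k / sqrt x * exp (- (c * x))) has_integral
           Gamma (real k + 1 / 2) / c powr (real k + 1 / 2)) {0<..}"
proof (rule has_integral_eq[rotated])
  show "((\<lambda>x. x powr (real k + 1 / 2 - 1) * exp (- (c * x))) has_integral
      Gamma (real k + 1 / 2) / c powr (real k + 1 / 2)) {0<..}"
    using assms by (intro has_integral_powr_exp) auto
next
  fix x :: real
  assume "x \<in> {0<..}"
  moreover have "x powr (real k + 1 / 2 - 1) = x powr real k / x powr (1 / 2)"
    by (simp add: powr_diff[symmetric])
  ultimately show "x powr (real k + 1 / 2 - 1) * exp (- (c * x)) = x ^ k / sqrt x * exp (- (c * x))"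
    by (simp add: powr_realpow powr_half_sqrt)
qed

lemma integral_bound_by_dominated_difference:
  fixes f g h :: "real \<Rightarrow> real"
  assumes S: "S \<in> sets lebesgue" and f: "f \<in> borel_measurable (lebesgue_on S)"
    and g: "(g has_integral G) S" and h: "(h has_integral H) S"
    and bound: "\<And>x. x \<in> S \<Longrightarrow> \<bar>f x - g x\<bar> \<le> h x"
  shows "f integrable_on S" and "\<bar>integral S f - G\<bar> \<le> H"
proof -
  have "g \<in> borel_measurable (lebesgue_on S)"
    using g by (intro integrable_imp_measurable) (rule has_integral_integrable)
  with f have "(\<lambda>x. f x - g x) \<in> borel_measurable (lebesgue_on S)"
    by (rule borel_measurable_diff)
  then have "(\<lambda>x. f x - g x) absolutely_integrable_on S"
    using S h bound by (intro measurable_bounded_by_integrable_imp_absolutely_integrable) auto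
  then have diff: "(\<lambda>x. f x - g x) integrable_on S"
    by (simp add: absolutely_integrable_on_def)
  then have "(\<lambda>x. (f x - g x) + g x) integrable_on S"
    using g by (intro integrable_add) auto
  then show f_int: "f integrable_on S"
    by simp
  have "norm (integral S (\<lambda>x. f x - g x)) \<le> integral S h"
    using h bound by (intro integral_norm_bound_integral[OF diff]) auto
  moreover have "integral S (\<lambda>x. f x - g x) = integral S f - G"
    using f_int g by (simp add: integral_diff has_integral_iff)
  ultimately show "\<bar>integral S f - G\<bar> \<le> H"
    using h by (simp add: has_integral_iff)
qed

lemma has_integral_linear_quadratic_div_sqrt_exp:
  fixes a b m :: real
  assumes "0 < m"
  shows "((\<lambda>x. (a * x + b * x\<^sup>2) * exp (- (m * x)) / sqrt x) has_integral
           a * (Gamma (3 / 2) / m powr (3 / 2)) + b * (Gamma (5 / 2) / m powr (5 / 2))) {0<..}"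
proof -
  have "((\<lambda>x. x ^ 1 / sqrt x * exp (- (m * x))) has_integral Gamma (3 / 2) / m powr (3 / 2)) {0<..}"
    using has_integral_power_div_sqrt_exp[OF assms, of 1] by simp
  moreover have "((\<lambda>x. x ^ 2 / sqrt x * exp (- (m * x))) has_integral Gamma (5 / 2) / m powr (5 / 2)) {0<..}"
    using has_integral_power_div_sqrt_exp[OF assms, of 2] by simp
  ultimately have "((\<lambda>x. a * (x ^ 1 / sqrt x * exp (- (m * x))) + b * (x ^ 2 / sqrt x * exp (- (m * x))))
      has_integral a * (Gamma (3 / 2) / m powr (3 / 2)) + b * (Gamma (5 / 2) / m powr (5 / 2))) {0<..}"
    by (intro has_integral_add has_integral_mult_right)
  then show ?thesis
    by (rule has_integral_eq[rotated]) (simp add: algebra_simps add_divide_distrib)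
qed

lemma exp_div_sqrt_le_tail_majorant:
  fixes n x C :: real
  assumes "1 \<le> n" "1 \<le> x" "0 \<le> C"
  shows "exp (- (n / 3 * x)) / sqrt x \<le> (C * x + n * x\<^sup>2) * exp (- ((n - 1) / 3 * x)) / sqrt x"
proof -
  let ?e = "exp (- ((n - 1) / 3 * x))"
  have "1 \<le> n * x\<^sup>2"
    using mult_mono[of 1 n 1 "x\<^sup>2"] assms by (simp add: one_le_power)
  have "exp (- (n / 3 * x)) \<le> ?e"
    using assms by (simp add: field_simps)
  also have "\<dots> \<le> n * x\<^sup>2 * ?e"
    using mult_right_mono[of 1 "n * x\<^sup>2" ?e] \<open>1 \<le> n * x\<^sup>2\<close> by simp
  also have "\<dots> \<le> (C * x + n * x\<^sup>2) * ?e"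
    using assms by (intro mult_right_mono) auto
  finally show ?thesis
    using assms by (intro divide_right_mono) auto
qed

lemma laplace_integrand_integral_estimate:
  fixes n :: real
  assumes n: "1 < n"
  shows "laplace_integrand n d integrable_on {0<..<1}"
    and "\<bar>integral {0<..<1} (laplace_integrand n d) - Gamma (1 / 2) / (n / 3) powr (1 / 2)\<bar>
      \<le> 9 / 4 * (1 + real d / 3) * Gamma (3 / 2) / ((n - 1) / 3) powr (3 / 2)
         + n * Gamma (5 / 2) / ((n - 1) / 3) powr (5 / 2)"
proof -
  define m where "m = (n - 1) / 3"
  define C where "C = 9 / 4 * (1 + real d / 3)"
  \<comment> \<open>extended by zero beyond 1 to compare it with Gamma integrals over (0, \<infinity>)\<close>
  define f where "f = (\<lambda>x. if x < 1 then laplace_integrand n d x else 0)"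
  define g where "g = (\<lambda>x. exp (- (n / 3 * x)) / sqrt x)"
  define h where "h = (\<lambda>x. (C * x + n * x\<^sup>2) * exp (- (m * x)) / sqrt x)"
  have m: "0 < m"
    using n by (simp add: m_def)
  have g: "(g has_integral Gamma (1 / 2) / (n / 3) powr (1 / 2)) {0<..}"
    using has_integral_power_div_sqrt_exp[of "n / 3" 0] n by (simp add: g_def)
  have h: "(h has_integral
      C * (Gamma (3 / 2) / m powr (3 / 2)) + n * (Gamma (5 / 2) / m powr (5 / 2))) {0<..}"
    unfolding h_def using m by (rule has_integral_linear_quadratic_div_sqrt_exp)
  have bound: "\<bar>f x - g x\<bar> \<le> h x" if x: "x \<in> {0<..}" for x
  proof (cases "x < 1")
    case True
    then show ?thesis
      using laplace_integrand_approx[of n x d] n x by (simp add: f_def g_def h_def C_def m_def)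
  next
    case False
    then show ?thesis
      using exp_div_sqrt_le_tail_majorant[of n x C] n by (simp add: f_def g_def h_def C_def m_def)
  qed
  have f_meas: "f \<in> borel_measurable (lebesgue_on {0<..})"
    unfolding f_def laplace_integrand_def laplace_ratio_def
    by (rule measurable_restrict_space1, rule measurable_completion) measurable
  have f_restrict:
    "(f has_integral I) {0<..} \<longleftrightarrow> (laplace_integrand n d has_integral I) {0<..<1}" for I
  proof -
    have "(f has_integral I) {0<..} \<longleftrightarrow>
        ((\<lambda>x. if x \<in> {0<..<1} then laplace_integrand n d x else 0) has_integral I) {0<..}"
      by (intro has_integral_cong) (simp add: f_def)
    also have "\<dots> \<longleftrightarrow> (laplace_integrand n d has_integral I) {0<..<1}"
      by (rule has_integral_restrict) auto
    finally show ?thesis .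
  qed
  have "f integrable_on {0<..}"
    and estimate: "\<bar>integral {0<..} f - Gamma (1 / 2) / (n / 3) powr (1 / 2)\<bar>
      \<le> C * (Gamma (3 / 2) / m powr (3 / 2)) + n * (Gamma (5 / 2) / m powr (5 / 2))"
    using integral_bound_by_dominated_difference[OF _ f_meas g h bound] by auto
  then have "(laplace_integrand n d has_integral integral {0<..} f) {0<..<1}"
    using f_restrict by (simp add: has_integral_integral)
  then show "laplace_integrand n d integrable_on {0<..<1}"
    and "\<bar>integral {0<..<1} (laplace_integrand n d) - Gamma (1 / 2) / (n / 3) powr (1 / 2)\<bar>
      \<le> 9 / 4 * (1 + real d / 3) * Gamma (3 / 2) / ((n - 1) / 3) powr (3 / 2)
         + n * Gamma (5 / 2) / ((n - 1) / 3) powr (5 / 2)"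
    using estimate by (auto simp: has_integral_iff C_def m_def)
qed

lemma Cnd_integrand_reflect:
  fixes n x :: real
  assumes "0 < x" "x < 1"
  shows "(1 - x) powr (n - 1) / (sqrt (1 - (1 - x)) * (1 + 1 / 2 * (1 - x)) powr (2 * n - real d / 2))
    = (3 / 2) powr (real d / 2 - 2 * n) * laplace_integrand n d x"
proof -
  define y where "y = 1 - x / 3"
  define r where "r = laplace_ratio x"
  have y: "0 < y" and r: "0 < r"
    using assms laplace_ratio_bounds(1)[OF assms] by (auto simp: y_def r_def)
  have "(1 - x) powr (n - 1) = (r * y powr 2) powr (n - 1)"
    using y by (simp add: r_def y_def laplace_ratio_def powr_numeral)
  also have "\<dots> = r powr (n - 1) * (y powr 2) powr (n - 1)"
    using r y by (simp add: powr_mult)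
  also have "(y powr 2) powr (n - 1) = y powr (2 * n - 2)"
    by (simp only: powr_powr) (simp add: algebra_simps)
  finally have num: "(1 - x) powr (n - 1) = r powr (n - 1) * y powr (2 * n - 2)" .
  have "1 + 1 / 2 * (1 - x) = 3 / 2 * y"
    by (simp add: y_def)
  then have "(1 + 1 / 2 * (1 - x)) powr (2 * n - real d / 2) = (3 / 2 * y) powr (2 * n - real d / 2)"
    by (rule arg_cong)
  also have "\<dots> = (3 / 2) powr (2 * n - real d / 2) * y powr (2 * n - real d / 2)"
    using y powr_mult[of "3 / 2" y] by simp
  finally have den: "(1 + 1 / 2 * (1 - x)) powr (2 * n - real d / 2)
      = (3 / 2) powr (2 * n - real d / 2) * y powr (2 * n - real d / 2)" .
  have "y powr (real d / 2 - 2) = y powr (2 * n - 2) / y powr (2 * n - real d / 2)"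
    using y by (simp add: powr_diff[symmetric])
  moreover have "(3 / 2 :: real) powr (real d / 2 - 2 * n) = 1 / (3 / 2) powr (2 * n - real d / 2)"
    by (simp add: powr_minus_divide[symmetric])
  ultimately show ?thesis
    unfolding num den laplace_integrand_def r_def[symmetric] y_def[symmetric] by simp
qed

lemma Cnd_half_eq_laplace_integral:
  assumes "laplace_integrand n d integrable_on {0<..<1}"
  shows "Cnd n d (1 / 2)
    = 3 powr n * (3 / 2) powr (real d / 2 - 2 * n) * integral {0<..<1} (laplace_integrand n d)"
proof -
  define F where "F = (\<lambda>s. s powr (n - 1) / (sqrt (1 - s) * (1 + 1 / 2 * s) powr (2 * n - real d / 2)))"
  define A where "A = (3 / 2 :: real) powr (real d / 2 - 2 * n)"
  define Q where "Q = integral {0<..<1} (laplace_integrand n d)"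
  have reflect: "F (1 - x) = A * laplace_integrand n d x" if "x \<in> {0<..<1}" for x
    using Cnd_integrand_reflect[of x n d] that by (simp add: F_def A_def)
  have "0 \<le> laplace_integrand n d x" if "x \<in> {0<..<1}" for x
    using that laplace_ratio_bounds(1)[of x] by (simp add: laplace_integrand_def)
  then have "laplace_integrand n d absolutely_integrable_on {0<..<1}"
    using assms by (intro nonnegative_absolutely_integrable_1) auto
  then have "(\<lambda>x. A * laplace_integrand n d x) absolutely_integrable_on {0<..<1}"
    using absolutely_integrable_scaleR_left[of _ _ A] by simp
  then have "(\<lambda>x. \<bar>-1\<bar> * F (1 - x)) absolutely_integrable_on {0<..<1}"
    by (rule absolutely_integrable_spike[OF _ negligible_empty]) (auto simp: reflect)
  moreover have "integral {0<..<1} (\<lambda>x. \<bar>-1\<bar> * F (1 - x)) = A * Q"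
  proof -
    have "integral {0<..<1} (\<lambda>x. \<bar>-1\<bar> * F (1 - x))
        = integral {0<..<1} (\<lambda>x. A * laplace_integrand n d x)"
      by (rule integral_cong) (simp add: reflect)
    then show ?thesis
      by (simp add: Q_def)
  qed
  moreover have "(\<lambda>x. 1 - x) ` {0<..<1} = ({0<..<1} :: real set)"
  proof
    show "{0<..<1} \<subseteq> (\<lambda>x. 1 - x) ` {0<..<1::real}"
    proof
      fix y :: real
      assume "y \<in> {0<..<1}"
      then show "y \<in> (\<lambda>x. 1 - x) ` {0<..<1}"
        by (intro image_eqI[of y _ "1 - y"]) auto
    qed
  qed auto
  moreover have "((\<lambda>x. 1 - x) has_real_derivative -1) (at x within {0<..<1})" for x :: real
    by (auto intro!: derivative_eq_intros)
  moreover have "inj_on (\<lambda>x::real. 1 - x) {0<..<1}"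
    by (auto intro: inj_onI)
  ultimately have F: "F absolutely_integrable_on {0<..<1} \<and> integral {0<..<1} F = A * Q"
    using has_absolute_integral_change_of_variables_1'[of "{0<..<1}" "\<lambda>x. 1 - x" "\<lambda>_. -1" F "A * Q"]
    by simp
  have "integrable lebesgue (\<lambda>x. indicator {0<..<1} x *\<^sub>R F x)"
    using F by (simp add: absolutely_integrable_on_def set_integrable_def)
  moreover have "(\<lambda>x. indicator {0<..<1} x *\<^sub>R F x) \<in> borel_measurable lborel"
    unfolding F_def by measurable
  ultimately have "set_integrable lborel {0<..<1} F"
    unfolding set_integrable_def using integrable_completion by blast
  moreover have "einterval 0 1 = {0<..<1::real}"
    by (auto simp: einterval_def)
  ultimately have "interval_lebesgue_integral lborel 0 1 F = integral {0<..<1} F"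
    using interval_integral_eq_integral'[of 0 1 F] by simp
  then show ?thesis
    unfolding Cnd_def F_def[symmetric] using F by (simp add: A_def Q_def)
qed

lemma leading_term_conv_Gamma:
  fixes n :: real
  assumes n: "0 < n"
  shows "sqrt pi * 3 powr (real d / 2 + 1 / 2) / (2 powr (real d / 2) * sqrt n) * (4 / 3) powr n
    = 3 powr n * (3 / 2) powr (real d / 2 - 2 * n) * (Gamma (1 / 2) / (n / 3) powr (1 / 2))"
proof -
  have "(3 / 2 :: real) powr (2 * n) = (3 / 2) powr n * (3 / 2) powr n"
    using powr_add[of "3 / 2 :: real" n n] by simp
  then have three_halves: "(3 / 2 :: real) powr (real d / 2 - 2 * n)
      = 3 powr (real d / 2) / 2 powr (real d / 2) / ((3 powr n * 3 powr n) / (2 powr n * 2 powr n))"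
    by (simp add: powr_diff powr_divide)
  have four_thirds: "(4 / 3 :: real) powr n = (2 powr n * 2 powr n) / 3 powr n"
    using powr_mult[of 2 2 n] by (simp add: powr_divide)
  have sqrt_n: "(n / 3) powr (1 / 2) = sqrt n / sqrt 3"
    using n by (simp add: powr_half_sqrt real_sqrt_divide)
  have three: "(3 :: real) powr (real d / 2 + 1 / 2) = 3 powr (real d / 2) * sqrt 3"
    by (simp add: powr_add powr_half_sqrt)
  have "0 < (3 :: real) powr n" "0 < (2 :: real) powr n" "0 < sqrt n"
    using n by auto
  then show ?thesis
    unfolding three_halves four_thirds sqrt_n three Gamma_one_half_real by (simp add: field_simps)
qed

lemma relative_error_bigo:
  fixes a b c :: real
  shows "(\<lambda>n. (a / ((n - 1) / 3) powr (3 / 2) + n * b / ((n - 1) / 3) powr (5 / 2))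
      / (c / (n / 3) powr (1 / 2))) \<in> O[at_top](\<lambda>n. 1 / n)"
proof -
  have "(\<lambda>n::real. (n / 3) powr (1 / 2) / ((n - 1) / 3) powr (3 / 2)) \<in> O[at_top](\<lambda>n. 1 / n)"
    and "(\<lambda>n::real. n * (n / 3) powr (1 / 2) / ((n - 1) / 3) powr (5 / 2)) \<in> O[at_top](\<lambda>n. 1 / n)"
    by real_asymp+
  then have "(\<lambda>n. a / c * ((n / 3) powr (1 / 2) / ((n - 1) / 3) powr (3 / 2))
      + b / c * (n * (n / 3) powr (1 / 2) / ((n - 1) / 3) powr (5 / 2))) \<in> O[at_top](\<lambda>n. 1 / n)"
    by (intro sum_in_bigo cmult_in_bigo_iff[THEN iffD2, OF disjI2])
  then show ?thesis
    by (simp add: divide_divide_eq_right add_divide_distrib ring_distribs mult_ac)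
qed

theorem lemma4p5:
  fixes d :: nat
  assumes "d \<ge> 1"
  shows "(\<lambda>n::real. Cnd n d (1/2) /
            (sqrt pi * 3 powr (real d / 2 + 1/2) / (2 powr (real d / 2) * sqrt n) * (4/3) powr n) - 1)
         \<in> O[at_top](\<lambda>n. 1 / n)"
proof -
  \<comment> \<open>the estimate below holds for every d\<close>
  define T where "T n = sqrt pi * 3 powr (real d / 2 + 1/2) / (2 powr (real d / 2) * sqrt n) * (4/3) powr n"
    for n :: real
  define G where "G n = Gamma (1 / 2) / (n / 3) powr (1 / 2)" for n :: real
  define E where "E n = 9 / 4 * (1 + real d / 3) * Gamma (3 / 2) / ((n - 1) / 3) powr (3 / 2)
    + n * Gamma (5 / 2) / ((n - 1) / 3) powr (5 / 2)" for n :: real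
  have bound: "\<bar>Cnd n d (1 / 2) / T n - 1\<bar> \<le> E n / G n" if n: "2 \<le> n" for n
  proof -
    let ?I = "integral {0<..<1} (laplace_integrand n d)"
    have G: "0 < G n"
      using n by (simp add: G_def Gamma_one_half_real)
    define K where "K = 3 powr n * (3 / 2) powr (real d / 2 - 2 * n)"
    have "Cnd n d (1 / 2) = K * ?I"
      unfolding K_def using n by (intro Cnd_half_eq_laplace_integral laplace_integrand_integral_estimate) simp
    moreover have "T n = K * G n"
      unfolding K_def T_def G_def using n by (intro leading_term_conv_Gamma) simp
    moreover have "0 < K"
      by (simp add: K_def)
    ultimately have "Cnd n d (1 / 2) / T n - 1 = (?I - G n) / G n"
      using G by (simp add: diff_divide_distrib)
    moreover have "\<bar>?I - G n\<bar> \<le> E n"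
      using laplace_integrand_integral_estimate(2)[of n d] n by (simp add: G_def E_def)
    ultimately show ?thesis
      using G by (simp add: abs_divide divide_right_mono)
  qed
  have "norm (Cnd n d (1 / 2) / T n - 1) \<le> 1 * norm (E n / G n)" if "2 \<le> n" for n
    using bound[OF that] abs_ge_self[of "E n / G n"] by simp
  then have "\<forall>\<^sub>F n in at_top. norm (Cnd n d (1 / 2) / T n - 1) \<le> 1 * norm (E n / G n)"
    by (intro eventually_mono[OF eventually_ge_at_top[of 2]])
  then have "(\<lambda>n. Cnd n d (1 / 2) / T n - 1) \<in> O[at_top](\<lambda>n. E n / G n)"
    by (rule bigoI)
  moreover have "(\<lambda>n. E n / G n) \<in> O[at_top](\<lambda>n. 1 / n)"
    unfolding E_def G_def by (rule relative_error_bigo)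
  ultimately show ?thesis
    unfolding T_def by (rule landau_o.big_trans)
qed

end
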